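(* For every tournament $R$ on $[n]=\{1,\dots,n\}$ there exist distinct $f_1,\dots,f_n\in\mathcal G_0$ such that for all distinct $i,j\in[n]$, $$\int_{-1}^1 f_j(f_i^{-1}(t))\,dt>0 \iff (i,j)\in R .$$ That is, every finite tournament embeds into the restriction of the digraph $\Gamma_{\mathcal G}$ to $\mathcal G_0$.
   Context: A tournament on a set $I$ is a subset $R\subset I\times I$ containing no pair $(i,i)$ such that for every pair of distinct $i,j\in I$ exactly one of $(i,j),(j,i)$ lies in $R$. Let $\mathcal G$ be the group (under composition) of strictly increasing continuous maps $f:[-1,1]\to[-1,1]$ with $f(-1)=-1$, $f(1)=1$, and $\mathcal G_0=\{f\in\mathcal G:\int_{-1}^1 f(t)\,dt=0\}$. The digraph $\Gamma_{\mathcal G}$ on $\mathcal G$ has an edge $f\to g$ iff $\int_{-1}^1 g(f^{-1}(t))\,dt>0$. *)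

theory Defs
  imports "HOL-Analysis.Analysis"
begin

definition tournament :: "'a set \<Rightarrow> ('a \<times> 'a) set \<Rightarrow> bool" where
  "tournament I R \<longleftrightarrow> R \<subseteq> I \<times> I \<and> (\<forall>i. (i, i) \<notin> R) \<and>
     (\<forall>i\<in>I. \<forall>j\<in>I. i \<noteq> j \<longrightarrow> ((i, j) \<in> R \<longleftrightarrow> (j, i) \<notin> R))"

text \<open>Elements of the group G: strictly increasing continuous self-maps of [-1,1]
  fixing the endpoints. A map is represented by a function real => real; only its
  values on [-1,1] matter.\<close>
definition in_G :: "(real \<Rightarrow> real) \<Rightarrow> bool" where
  "in_G f \<longleftrightarrow> continuous_on {-1..1} f \<and> strict_mono_on {-1..1} f \<and>
     f ` {-1..1} \<subseteq> {-1..1} \<and> f (-1) = -1 \<and> f 1 = 1"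

definition in_G0 :: "(real \<Rightarrow> real) \<Rightarrow> bool" where
  "in_G0 f \<longleftrightarrow> in_G f \<and> integral {-1..1} f = 0"

definition Gamma_edge :: "(real \<Rightarrow> real) \<Rightarrow> (real \<Rightarrow> real) \<Rightarrow> bool" where
  "Gamma_edge f g \<longleftrightarrow> integral {-1..1} (\<lambda>t. g (inv_into {-1..1} f t)) > 0"

end

theory Submission
  imports Defs
begin

(* Perturb the identity: f_i = id + e_i * phi_i, where phi_i vanishes at -1 and 1 and has mean
   zero, so that f_i lies in G_0 once e_i > 0 is small.  Substituting t = f_i(x),
     integral f_j (f_i^-1 t) dt = integral f_j * f_i' = e_i * e_j * integral phi_j * phi_i',
   because the terms of order 0 and 1 vanish (integral x * phi_i' = - integral phi_i = 0).
   The trigonometric modes u_k = sin (2 k pi x) / (2 k pi) and v_k = cos (2 k pi x) + cos ((2k-1) pi x)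
   satisfy integral u_j * v_k' = -[j = k], integral v_l * u_i' = [l = i], and all other pairings vanish.
   Hence phi_i = u_i + (sum of v_k over the in-neighbours k of i) gives
     integral phi_j * phi_i' = [(i, j) : R] - [(j, i) : R],
   whose sign is the orientation of the edge between i and j.  Distinctness of the f_i is then
   automatic, since the digraph has no loops. *)

lemma has_integral_antiderivative:
  fixes F f :: "real \<Rightarrow> real"
  assumes "a \<le> b" and "\<And>x. (F has_real_derivative f x) (at x)"
  shows "(f has_integral (F b - F a)) {a..b}"
  using assms fundamental_theorem_of_calculus has_field_derivative_at_within
    has_real_derivative_iff_has_vector_derivative by blast

lemma in_G_image:
  assumes "in_G f"
  shows "f ` {-1..1} = {-1..1}"
proof
  show "f ` {-1..1} \<subseteq> {-1..1}"
    using assms unfolding in_G_def by blast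
  show "{-1..1} \<subseteq> f ` {-1..1}"
  proof
    fix y :: real assume "y \<in> {-1..1}"
    then obtain x where "-1 \<le> x" "x \<le> 1" "f x = y"
      using IVT'[of f "-1" y 1] assms unfolding in_G_def by auto
    then show "y \<in> f ` {-1..1}" by force
  qed
qed

lemma Gamma_edge_self:
  assumes "in_G f"
  shows "\<not> Gamma_edge f f"
proof -
  have "integral {-1..1} (\<lambda>t. f (inv_into {-1..1} f t)) = integral {-1..1} (\<lambda>t. t)"
    using in_G_image[OF assms] by (intro integral_cong) (simp add: f_inv_into_f)
  also have "\<dots> = 0"
    using ident_has_integral[of "-1" 1] by (simp add: integral_unique)
  finally show ?thesis
    unfolding Gamma_edge_def by simp
qed

lemma Gamma_edge_cong:
  assumes "in_G f" and "\<And>t. t \<in> {-1..1} \<Longrightarrow> g t = h t"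
  shows "Gamma_edge f g \<longleftrightarrow> Gamma_edge f h"
proof -
  have "inv_into {-1..1} f t \<in> {-1..1}" if "t \<in> {-1..1}" for t
    using in_G_image[OF assms(1)] that by (metis inv_into_into)
  then show ?thesis
    unfolding Gamma_edge_def using assms(2) by (metis (no_types, lifting) integral_cong)
qed

lemma Gamma_edge_imp_differ:
  assumes "in_G f" and "Gamma_edge f g"
  shows "\<exists>t\<in>{-1..1}. f t \<noteq> g t"
proof (rule ccontr)
  assume "\<not> ?thesis"
  then have "Gamma_edge f f \<longleftrightarrow> Gamma_edge f g"
    by (intro Gamma_edge_cong[OF assms(1)]) blast
  then show False
    using assms(2) Gamma_edge_self[OF assms(1)] by blast
qed

lemma in_G_if_deriv_pos:
  assumes deriv: "\<And>x. (f has_real_derivative f' x) (at x)"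
    and pos: "\<And>x. x \<in> {-1..1} \<Longrightarrow> 0 < f' x"
    and "f (-1) = -1" and "f 1 = 1"
  shows "in_G f"
proof -
  have mono: "strict_mono_on {-1..1} f"
  proof (rule strict_mono_onI)
    fix r s :: real assume r: "r \<in> {-1..1}" and s: "s \<in> {-1..1}" and "r < s"
    show "f r < f s"
    proof (rule DERIV_pos_imp_increasing[OF \<open>r < s\<close>])
      fix x assume "r \<le> x" "x \<le> s"
      then have "x \<in> {-1..1}"
        using r s by simp
      then show "\<exists>y. (f has_real_derivative y) (at x) \<and> 0 < y"
        using deriv pos by blast
    qed
  qed
  have "f ` {-1..1} \<subseteq> {-1..1}"
  proof
    fix y assume "y \<in> f ` {-1..1}"
    then obtain x where "x \<in> {-1..1}" "y = f x" by blast
    then have "f (-1) \<le> y" "y \<le> f 1"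
      using strict_mono_on_leD[OF mono] by auto
    then show "y \<in> {-1..1}"
      using \<open>f (-1) = -1\<close> \<open>f 1 = 1\<close> by simp
  qed
  moreover have "continuous_on {-1..1} f"
    using deriv by (meson DERIV_continuous_on has_field_derivative_at_within)
  ultimately show ?thesis
    unfolding in_G_def using mono assms(3,4) by blast
qed

lemma has_integral_compose_inv_into:
  assumes "in_G f" and deriv: "\<And>x. (f has_real_derivative f' x) (at x)"
    and "continuous_on {-1..1} g"
  shows "((\<lambda>x. f' x * g x) has_integral integral {-1..1} (\<lambda>t. g (inv_into {-1..1} f t))) {-1..1}"
proof -
  let ?h = "g \<circ> inv_into {-1..1} f"
  have image: "f ` {-1..1} = {-1..1}" and ends: "f (-1) = -1" "f 1 = 1"
    and cont: "continuous_on {-1..1} f" and mono: "strict_mono_on {-1..1} f"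
    using in_G_image[OF assms(1)] assms(1) unfolding in_G_def by auto
  have inv: "inv_into {-1..1} f (f x) = x" if "x \<in> {-1..1}" for x
    using mono that by (simp add: strict_mono_on_imp_inj_on)
  have "continuous_on (f ` {-1..1}) (inv_into {-1..1} f)"
    using cont inv by (intro continuous_on_inv) auto
  moreover have "inv_into {-1..1} f ` {-1..1} \<subseteq> {-1..1}"
    using image by (metis image_subsetI inv_into_into)
  ultimately have "continuous_on {-1..1} ?h"
    using image assms(3) by (metis continuous_on_compose continuous_on_subset)
  then have subst: "((\<lambda>x. f' x *\<^sub>R ?h (f x)) has_integral integral {f (-1)..f 1} ?h) {-1..1}"
    using image ends deriv
    by (intro has_integral_substitution) (auto intro: has_field_derivative_at_within)
  have "((\<lambda>x. f' x * g x) has_integral integral {f (-1)..f 1} ?h) {-1..1}"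
    by (rule has_integral_cong[THEN iffD1, OF _ subst]) (simp add: inv)
  then show ?thesis
    using ends by (simp add: o_def)
qed

lemma has_integral_id_mult_deriv:
  assumes deriv: "\<And>x. (\<phi> has_real_derivative \<phi>' x) (at x)"
    and "\<phi> (-1) = 0" "\<phi> 1 = 0" and "(\<phi> has_integral 0) {-1..1}"
  shows "((\<lambda>x. x * \<phi>' x) has_integral 0) {-1..1}"
proof -
  have "((\<lambda>x. x * \<phi> x) has_real_derivative \<phi> x + x * \<phi>' x) (at x)" for x
    by (auto intro!: derivative_eq_intros deriv)
  then have "((\<lambda>x. \<phi> x + x * \<phi>' x) has_integral (1 * \<phi> 1 - (-1) * \<phi> (-1))) {-1..1}"
    by (intro has_integral_antiderivative[of "-1" 1 "\<lambda>x. x * \<phi> x"]) auto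
  then have "((\<lambda>x. \<phi> x + x * \<phi>' x) has_integral 0) {-1..1}"
    using assms(2,3) by simp
  from has_integral_diff[OF this assms(4)] show ?thesis
    by simp
qed

lemma perturbation_in_G0:
  assumes deriv: "\<And>x. (\<phi> has_real_derivative \<phi>' x) (at x)"
    and "\<phi> (-1) = 0" "\<phi> 1 = 0" and "(\<phi> has_integral 0) {-1..1}"
    and "\<And>x. x \<in> {-1..1} \<Longrightarrow> 0 < 1 + \<epsilon> * \<phi>' x"
  shows "in_G0 (\<lambda>x. x + \<epsilon> * \<phi> x)"
proof -
  have "in_G (\<lambda>x. x + \<epsilon> * \<phi> x)"
    using assms by (intro in_G_if_deriv_pos[where f' = "\<lambda>x. 1 + \<epsilon> * \<phi>' x"])
      (auto intro!: derivative_eq_intros deriv simp: mult.commute)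
  moreover have "((\<lambda>x. x + \<epsilon> * \<phi> x) has_integral 0) {-1..1}"
    using has_integral_add[OF ident_has_integral[of "-1" 1] has_integral_mult_right[OF assms(4)]]
    by simp
  ultimately show ?thesis
    unfolding in_G0_def by (simp add: integral_unique)
qed

lemma Gamma_edge_perturbation_iff:
  assumes deriv: "\<And>x. (\<phi> has_real_derivative \<phi>' x) (at x)"
    and "\<phi> (-1) = 0" "\<phi> 1 = 0" and "(\<phi> has_integral 0) {-1..1}"
    and "\<And>x. x \<in> {-1..1} \<Longrightarrow> 0 < 1 + \<epsilon> * \<phi>' x"
    and "continuous_on {-1..1} \<psi>" and "(\<psi> has_integral 0) {-1..1}"
    and "((\<lambda>x. \<psi> x * \<phi>' x) has_integral c) {-1..1}"
  shows "Gamma_edge (\<lambda>x. x + \<epsilon> * \<phi> x) (\<lambda>x. x + \<delta> * \<psi> x) \<longleftrightarrow> 0 < \<epsilon> * \<delta> * c"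
proof -
  let ?f = "\<lambda>x. x + \<epsilon> * \<phi> x" and ?g = "\<lambda>x. x + \<delta> * \<psi> x"
  have "in_G ?f"
    using perturbation_in_G0[OF assms(1-5)] unfolding in_G0_def by blast
  moreover have "(?f has_real_derivative 1 + \<epsilon> * \<phi>' x) (at x)" for x
    by (auto intro!: derivative_eq_intros deriv simp: mult.commute)
  moreover have "continuous_on {-1..1} ?g"
    using assms(6) by (intro continuous_intros)
  ultimately have substitution: "((\<lambda>x. (1 + \<epsilon> * \<phi>' x) * ?g x) has_integral
      integral {-1..1} (\<lambda>t. ?g (inv_into {-1..1} ?f t))) {-1..1}"
    by (rule has_integral_compose_inv_into)
  have "((\<lambda>x. x + \<delta> * \<psi> x + \<epsilon> * (x * \<phi>' x) + \<epsilon> * \<delta> * (\<psi> x * \<phi>' x)) has_integral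
      (0 + \<delta> * 0 + \<epsilon> * 0 + \<epsilon> * \<delta> * c)) {-1..1}"
    using ident_has_integral[of "-1" 1] has_integral_id_mult_deriv[OF assms(1-4)] assms(7,8)
    by (intro has_integral_add has_integral_mult_right) simp_all
  moreover have "(\<lambda>x. (1 + \<epsilon> * \<phi>' x) * ?g x) =
      (\<lambda>x. x + \<delta> * \<psi> x + \<epsilon> * (x * \<phi>' x) + \<epsilon> * \<delta> * (\<psi> x * \<phi>' x))"
    by (rule ext) (simp add: algebra_simps)
  ultimately have "((\<lambda>x. (1 + \<epsilon> * \<phi>' x) * ?g x) has_integral \<epsilon> * \<delta> * c) {-1..1}"
    by simp
  then show ?thesis
    unfolding Gamma_edge_def using has_integral_unique[OF substitution] by simp
qed

lemma exists_small_scale: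
  fixes g :: "'a::topological_space \<Rightarrow> real"
  assumes "compact S" and "continuous_on S g"
  shows "\<exists>\<epsilon>>0. \<forall>x\<in>S. 0 < 1 + \<epsilon> * g x"
proof -
  obtain B where "B > 0" and B: "\<And>x. x \<in> S \<Longrightarrow> \<bar>g x\<bar> \<le> B"
    using compact_imp_bounded[OF compact_continuous_image[OF assms(2,1)]]
    unfolding bounded_pos by auto
  have "0 < 1 + 1 / (2 * B) * g x" if "x \<in> S" for x
    using B[OF that] \<open>B > 0\<close> by (auto simp: field_simps abs_le_iff)
  then show ?thesis
    using \<open>B > 0\<close> by (intro exI[of _ "1 / (2 * B)"]) auto
qed

lemma has_integral_sin_pi: "((\<lambda>x. sin (a * pi * x)) has_integral 0) {-1..1}"
proof (cases "a = 0")
  case False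
  have "((\<lambda>x. - cos (a * pi * x) / (a * pi)) has_real_derivative sin (a * pi * x)) (at x)" for x
    using False by (auto intro!: derivative_eq_intros simp: field_simps)
  from has_integral_antiderivative[of "-1" 1, OF _ this] show ?thesis
    by simp
qed simp

lemma has_integral_cos_pi:
  assumes "a \<in> \<int>"
  shows "((\<lambda>x. cos (a * pi * x)) has_integral (if a = 0 then 2 else 0)) {-1..1}"
proof (cases "a = 0")
  case True
  then show ?thesis
    using has_integral_const_real[of "1::real" "-1" 1] by simp
next
  case False
  have "((\<lambda>x. sin (a * pi * x) / (a * pi)) has_real_derivative cos (a * pi * x)) (at x)" for x
    using False by (auto intro!: derivative_eq_intros simp: field_simps)
  moreover have "sin (a * pi) = 0"
    using assms sin_times_pi_eq_0 by blast
  ultimately show ?thesis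
    using has_integral_antiderivative[of "-1" 1 "\<lambda>x. sin (a * pi * x) / (a * pi)"] False by simp
qed

lemma has_integral_sin_mult_cos_pi:
  "((\<lambda>x. sin (a * pi * x) * cos (b * pi * x)) has_integral 0) {-1..1}"
proof -
  have "sin (a * pi * x) * cos (b * pi * x) = sin ((a + b) * pi * x) / 2 + sin ((a - b) * pi * x) / 2" for x
  proof -
    have "(a + b) * pi * x = a * pi * x + b * pi * x" "(a - b) * pi * x = a * pi * x - b * pi * x"
      by (simp_all add: algebra_simps)
    then show ?thesis
      by (simp add: sin_times_cos add_divide_distrib)
  qed
  moreover have "((\<lambda>x. sin ((a + b) * pi * x) / 2 + sin ((a - b) * pi * x) / 2) has_integral 0 / 2 + 0 / 2) {-1..1}"
    by (intro has_integral_add has_integral_divide has_integral_sin_pi)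
  ultimately show ?thesis
    by simp
qed

lemma has_integral_sin_mult_sin_pi:
  fixes m n :: nat
  assumes "0 < m" and "0 < n"
  shows "((\<lambda>x. sin (m * pi * x) * sin (n * pi * x)) has_integral of_bool (m = n)) {-1..1}"
proof -
  have integrand: "(\<lambda>x. sin (m * pi * x) * sin (n * pi * x)) =
      (\<lambda>x. cos ((real m - real n) * pi * x) / 2 - cos ((real m + real n) * pi * x) / 2)"
    by (rule ext) (simp add: sin_times_sin algebra_simps diff_divide_distrib)
  have total: "(if real m - real n = 0 then 2 else 0) / 2 - (if real m + real n = 0 then 2 else 0) / 2
      = (of_bool (m = n) :: real)"
    using assms by simp
  show ?thesis
    unfolding integrand total[symmetric]
    by (intro has_integral_diff has_integral_divide has_integral_cos_pi Ints_diff Ints_add Ints_of_nat)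
qed

lemma has_integral_cos_mult_cos_pi:
  fixes m n :: nat
  assumes "0 < m" and "0 < n"
  shows "((\<lambda>x. cos (m * pi * x) * cos (n * pi * x)) has_integral of_bool (m = n)) {-1..1}"
proof -
  have integrand: "(\<lambda>x. cos (m * pi * x) * cos (n * pi * x)) =
      (\<lambda>x. cos ((real m - real n) * pi * x) / 2 + cos ((real m + real n) * pi * x) / 2)"
    by (rule ext) (simp add: cos_times_cos algebra_simps add_divide_distrib)
  have total: "(if real m - real n = 0 then 2 else 0) / 2 + (if real m + real n = 0 then 2 else 0) / 2
      = (of_bool (m = n) :: real)"
    using assms by simp
  show ?thesis
    unfolding integrand total[symmetric]
    by (intro has_integral_add has_integral_divide has_integral_cos_pi Ints_diff Ints_add Ints_of_nat)
qed

definition wave_sin :: "nat \<Rightarrow> real \<Rightarrow> real" where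
  "wave_sin k x = sin (real (2 * k) * pi * x) / (real (2 * k) * pi)"

definition dwave_sin :: "nat \<Rightarrow> real \<Rightarrow> real" where
  "dwave_sin k x = cos (real (2 * k) * pi * x)"

definition wave_cos :: "nat \<Rightarrow> real \<Rightarrow> real" where
  "wave_cos k x = cos (real (2 * k) * pi * x) + cos (real (2 * k - 1) * pi * x)"

definition dwave_cos :: "nat \<Rightarrow> real \<Rightarrow> real" where
  "dwave_cos k x = - (real (2 * k) * pi) * sin (real (2 * k) * pi * x)
     - (real (2 * k - 1) * pi) * sin (real (2 * k - 1) * pi * x)"

lemma has_real_derivative_wave_sin:
  "0 < k \<Longrightarrow> (wave_sin k has_real_derivative dwave_sin k x) (at x)"
  unfolding wave_sin_def[abs_def] dwave_sin_def
  by (auto intro!: derivative_eq_intros)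

lemma has_real_derivative_wave_cos: "(wave_cos k has_real_derivative dwave_cos k x) (at x)"
  unfolding wave_cos_def[abs_def] dwave_cos_def
  by (auto intro!: derivative_eq_intros simp: algebra_simps)

lemma wave_sin_endpoints: "wave_sin k (-1) = 0" "wave_sin k 1 = 0"
  unfolding wave_sin_def by simp_all

lemma wave_cos_endpoints:
  assumes "0 < k"
  shows "wave_cos k (-1) = 0" "wave_cos k 1 = 0"
proof -
  have "odd (2 * k - 1)"
    using assms by presburger
  then have "cos (real (2 * k - 1) * pi) = -1"
    using cos_npi[of "2 * k - 1"] by simp
  then show "wave_cos k (-1) = 0" "wave_cos k 1 = 0"
    unfolding wave_cos_def by simp_all
qed

lemma has_integral_wave_sin: "(wave_sin k has_integral 0) {-1..1}"
  unfolding wave_sin_def[abs_def]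
  using has_integral_divide[OF has_integral_sin_pi] by simp

lemma has_integral_wave_cos: "0 < k \<Longrightarrow> (wave_cos k has_integral 0) {-1..1}"
  unfolding wave_cos_def[abs_def]
  using has_integral_add[OF has_integral_cos_pi has_integral_cos_pi, of "real (2 * k)" "real (2 * k - 1)"]
  by simp

lemma has_integral_wave_sin_mult_dwave_sin:
  "((\<lambda>x. wave_sin j x * dwave_sin i x) has_integral 0) {-1..1}"
  unfolding wave_sin_def dwave_sin_def
  using has_integral_divide[OF has_integral_sin_mult_cos_pi, of "real (2 * j)" "real (2 * i)" "real (2 * j) * pi"]
  by simp

lemma has_integral_wave_sin_mult_dwave_cos:
  assumes "0 < j" and "0 < k"
  shows "((\<lambda>x. wave_sin j x * dwave_cos k x) has_integral - of_bool (j = k)) {-1..1}"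
proof -
  let ?c = "real (2 * j) * pi"
  have integrand: "(\<lambda>x. wave_sin j x * dwave_cos k x) =
      (\<lambda>x. - (real (2 * k) * pi / ?c) * (sin (real (2 * j) * pi * x) * sin (real (2 * k) * pi * x))
        - (real (2 * k - 1) * pi / ?c) * (sin (real (2 * j) * pi * x) * sin (real (2 * k - 1) * pi * x)))"
    unfolding wave_sin_def dwave_cos_def by (rule ext) (simp add: algebra_simps diff_divide_distrib)
  have "2 * j \<noteq> 2 * k - 1"
    using assms by presburger
  then have total: "- (real (2 * k) * pi / ?c) * of_bool (2 * j = 2 * k)
      - (real (2 * k - 1) * pi / ?c) * of_bool (2 * j = 2 * k - 1) = - of_bool (j = k)"
    by auto
  show ?thesis
    unfolding integrand total[symmetric] using assms
    by (intro has_integral_diff has_integral_mult_right has_integral_sin_mult_sin_pi) simp_all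
qed

lemma has_integral_wave_cos_mult_dwave_sin:
  assumes "0 < l" and "0 < i"
  shows "((\<lambda>x. wave_cos l x * dwave_sin i x) has_integral of_bool (l = i)) {-1..1}"
proof -
  have integrand: "(\<lambda>x. wave_cos l x * dwave_sin i x) =
      (\<lambda>x. cos (real (2 * l) * pi * x) * cos (real (2 * i) * pi * x)
        + cos (real (2 * l - 1) * pi * x) * cos (real (2 * i) * pi * x))"
    unfolding wave_cos_def dwave_sin_def by (rule ext) (simp add: algebra_simps)
  have "2 * l - 1 \<noteq> 2 * i"
    using assms by presburger
  then have total: "of_bool (2 * l = 2 * i) + of_bool (2 * l - 1 = 2 * i) = (of_bool (l = i) :: real)"
    by auto
  show ?thesis
    unfolding integrand total[symmetric] using assms
    by (intro has_integral_add has_integral_cos_mult_cos_pi) simp_all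
qed

lemma has_integral_wave_cos_mult_dwave_cos:
  "((\<lambda>x. wave_cos l x * dwave_cos k x) has_integral 0) {-1..1}"
proof -
  let ?a = "real (2 * k) * pi" and ?b = "real (2 * k - 1) * pi"
  have integrand: "(\<lambda>x. wave_cos l x * dwave_cos k x) =
      (\<lambda>x. - ?a * (sin (real (2 * k) * pi * x) * cos (real (2 * l) * pi * x))
        - ?a * (sin (real (2 * k) * pi * x) * cos (real (2 * l - 1) * pi * x))
        - ?b * (sin (real (2 * k - 1) * pi * x) * cos (real (2 * l) * pi * x))
        - ?b * (sin (real (2 * k - 1) * pi * x) * cos (real (2 * l - 1) * pi * x)))"
    unfolding wave_cos_def dwave_cos_def by (rule ext) (simp add: algebra_simps)
  have "((\<lambda>x. - ?a * (sin (real (2 * k) * pi * x) * cos (real (2 * l) * pi * x))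
        - ?a * (sin (real (2 * k) * pi * x) * cos (real (2 * l - 1) * pi * x))
        - ?b * (sin (real (2 * k - 1) * pi * x) * cos (real (2 * l) * pi * x))
        - ?b * (sin (real (2 * k - 1) * pi * x) * cos (real (2 * l - 1) * pi * x)))
      has_integral (- ?a * 0 - ?a * 0 - ?b * 0 - ?b * 0)) {-1..1}"
    by (intro has_integral_diff has_integral_mult_right has_integral_sin_mult_cos_pi)
  then show ?thesis
    unfolding integrand by simp
qed

definition wave :: "nat \<Rightarrow> nat set \<Rightarrow> real \<Rightarrow> real" where
  "wave i K x = wave_sin i x + (\<Sum>k\<in>K. wave_cos k x)"

definition dwave :: "nat \<Rightarrow> nat set \<Rightarrow> real \<Rightarrow> real" where
  "dwave i K x = dwave_sin i x + (\<Sum>k\<in>K. dwave_cos k x)"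

lemma has_real_derivative_wave:
  "0 < i \<Longrightarrow> (wave i K has_real_derivative dwave i K x) (at x)"
  unfolding wave_def[abs_def] dwave_def
  by (intro DERIV_add DERIV_sum has_real_derivative_wave_sin has_real_derivative_wave_cos)

lemma continuous_on_dwave: "continuous_on S (dwave i K)"
  unfolding dwave_def[abs_def] dwave_sin_def dwave_cos_def
  by (intro continuous_intros)

lemma continuous_on_wave: "continuous_on S (wave i K)"
  unfolding wave_def[abs_def] wave_sin_def wave_cos_def divide_inverse
  by (intro continuous_intros)

lemma wave_endpoints:
  assumes "0 \<notin> K"
  shows "wave i K (-1) = 0" "wave i K 1 = 0"
proof -
  have "wave_cos k (-1) = 0" "wave_cos k 1 = 0" if "k \<in> K" for k
    using assms that wave_cos_endpoints[of k] by (auto intro: gr0I)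
  then show "wave i K (-1) = 0" "wave i K 1 = 0"
    unfolding wave_def by (simp_all add: wave_sin_endpoints)
qed

lemma has_integral_wave:
  assumes "finite K" and "0 \<notin> K"
  shows "(wave i K has_integral 0) {-1..1}"
proof -
  have "((\<lambda>x. wave_sin i x + (\<Sum>k\<in>K. wave_cos k x)) has_integral (0 + (\<Sum>k\<in>K. 0))) {-1..1}"
    using assms
    by (intro has_integral_add has_integral_wave_sin has_integral_sum has_integral_wave_cos)
      (auto intro: gr0I)
  then show ?thesis
    unfolding wave_def[abs_def] by simp
qed

lemma has_integral_wave_mult_dwave:
  assumes "0 < i" "0 < j" and "finite K" "finite L" and "0 \<notin> K" "0 \<notin> L"
  shows "((\<lambda>x. wave j L x * dwave i K x) has_integral (of_bool (i \<in> L) - of_bool (j \<in> K))) {-1..1}"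
proof -
  have integrand: "(\<lambda>x. wave j L x * dwave i K x) =
      (\<lambda>x. wave_sin j x * dwave_sin i x + (\<Sum>k\<in>K. wave_sin j x * dwave_cos k x)
        + (\<Sum>l\<in>L. wave_cos l x * dwave_sin i x) + (\<Sum>l\<in>L. \<Sum>k\<in>K. wave_cos l x * dwave_cos k x))"
    unfolding wave_def dwave_def
    by (rule ext) (simp add: distrib_left distrib_right sum_distrib_left sum_distrib_right sum.distrib,
        rule sum.swap)
  have total: "0 + (\<Sum>k\<in>K. - of_bool (j = k)) + (\<Sum>l\<in>L. of_bool (l = i)) + (\<Sum>l\<in>L. \<Sum>k\<in>K. 0)
      = (of_bool (i \<in> L) - of_bool (j \<in> K) :: real)"
    using assms(3,4) by (simp add: sum_negf of_bool_def sum.delta sum.delta')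
  show ?thesis
    unfolding integrand total[symmetric] using assms
    by (intro has_integral_add has_integral_sum has_integral_wave_sin_mult_dwave_sin
        has_integral_wave_sin_mult_dwave_cos has_integral_wave_cos_mult_dwave_sin
        has_integral_wave_cos_mult_dwave_cos) (auto intro: gr0I)
qed

lemma exists_G0_Gamma_edge_iff:
  fixes R :: "(nat \<times> nat) set"
  assumes "R \<subseteq> {1..n} \<times> {1..n}"
  shows "\<exists>f. (\<forall>i\<in>{1..n}. in_G0 (f i)) \<and>
    (\<forall>i\<in>{1..n}. \<forall>j\<in>{1..n}. Gamma_edge (f i) (f j) \<longleftrightarrow> (i, j) \<in> R \<and> (j, i) \<notin> R)"
proof -
  define K where "K i = {k \<in> {1..n}. (k, i) \<in> R}" for i
  have K: "finite (K i)" "0 \<notin> K i" for i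
    unfolding K_def by auto
  have "\<exists>\<epsilon>>0. \<forall>x\<in>{-1..1}. 0 < 1 + \<epsilon> * dwave i (K i) x" for i
    by (intro exists_small_scale compact_Icc continuous_on_dwave)
  then obtain \<epsilon> where \<epsilon>: "\<And>i. 0 < \<epsilon> i" "\<And>i x. x \<in> {-1..1} \<Longrightarrow> 0 < 1 + \<epsilon> i * dwave i (K i) x"
    by metis
  define f where "f i = (\<lambda>x. x + \<epsilon> i * wave i (K i) x)" for i
  have G0: "in_G0 (f i)" if "i \<in> {1..n}" for i
    unfolding f_def using that K \<epsilon>
    by (intro perturbation_in_G0[where \<phi>' = "dwave i (K i)"] has_real_derivative_wave wave_endpoints
        has_integral_wave) auto
  have "Gamma_edge (f i) (f j) \<longleftrightarrow> (i, j) \<in> R \<and> (j, i) \<notin> R" if "i \<in> {1..n}" "j \<in> {1..n}" for i j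
  proof -
    have "Gamma_edge (f i) (f j) \<longleftrightarrow> 0 < \<epsilon> i * \<epsilon> j * (of_bool (i \<in> K j) - of_bool (j \<in> K i))"
      unfolding f_def using that K \<epsilon>
      by (intro Gamma_edge_perturbation_iff[where \<phi>' = "dwave i (K i)"] has_real_derivative_wave
          wave_endpoints has_integral_wave has_integral_wave_mult_dwave continuous_on_wave) auto
    also have "\<dots> \<longleftrightarrow> 0 < (of_bool (i \<in> K j) - of_bool (j \<in> K i) :: real)"
      using \<epsilon>(1)[of i] \<epsilon>(1)[of j] by (metis zero_less_mult_pos mult_pos_pos)
    also have "\<dots> \<longleftrightarrow> (i, j) \<in> R \<and> (j, i) \<notin> R"
      using that unfolding K_def by auto
    finally show ?thesis .
  qed
  with G0 show ?thesis
    by blast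
qed

theorem theorem2p1:
  fixes n :: nat and R :: "(nat \<times> nat) set"
  assumes "tournament {1..n} R"
  shows "\<exists>f :: nat \<Rightarrow> real \<Rightarrow> real.
           (\<forall>i\<in>{1..n}. in_G0 (f i)) \<and>
           (\<forall>i\<in>{1..n}. \<forall>j\<in>{1..n}. i \<noteq> j \<longrightarrow> (\<exists>t\<in>{-1..1}. f i t \<noteq> f j t)) \<and>
           (\<forall>i\<in>{1..n}. \<forall>j\<in>{1..n}. i \<noteq> j \<longrightarrow> (Gamma_edge (f i) (f j) \<longleftrightarrow> (i, j) \<in> R))"
proof -
  have "R \<subseteq> {1..n} \<times> {1..n}"
    using assms unfolding tournament_def by blast
  have tournament: "\<And>i j. i \<in> {1..n} \<Longrightarrow> j \<in> {1..n} \<Longrightarrow> i \<noteq> j \<Longrightarrow> (i, j) \<in> R \<longleftrightarrow> (j, i) \<notin> R"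
    using assms unfolding tournament_def by blast
  obtain f where G0: "\<forall>i\<in>{1..n}. in_G0 (f i)"
    and edge_asym: "\<forall>i\<in>{1..n}. \<forall>j\<in>{1..n}. Gamma_edge (f i) (f j) \<longleftrightarrow> (i, j) \<in> R \<and> (j, i) \<notin> R"
    using exists_G0_Gamma_edge_iff[OF \<open>R \<subseteq> {1..n} \<times> {1..n}\<close>] by (elim exE conjE)
  have edge: "Gamma_edge (f i) (f j) \<longleftrightarrow> (i, j) \<in> R" if "i \<in> {1..n}" "j \<in> {1..n}" "i \<noteq> j" for i j
    using edge_asym tournament[OF that] that by blast
  have distinct: "\<exists>t\<in>{-1..1}. f i t \<noteq> f j t" if "i \<in> {1..n}" "j \<in> {1..n}" "i \<noteq> j" for i j
  proof -
    have "in_G (f i)" "in_G (f j)"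
      using G0 that(1,2) unfolding in_G0_def by blast+
    moreover have "Gamma_edge (f i) (f j) \<or> Gamma_edge (f j) (f i)"
      using edge[OF that] edge[of j i] tournament[OF that] that by blast
    ultimately show ?thesis
      by (metis Gamma_edge_imp_differ)
  qed
  with G0 edge show ?thesis
    by (intro exI[of _ f]) blast
qed

end
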